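(* Consider the following slot-assignment problem. There are $M$ agents $a_1,\dots,a_M$ and $N$ stations $s_1,\dots,s_N$, a processing time $T\in\mathbb{Z}_{>0}$ and an integer $K\ge 1$; the time window $[0,KT)$ of each station $s_j$ is divided into $K$ working slots $[kT,(k+1)T)$, $k=0,\dots,K-1$. For every agent $a_i$ and station $s_j$ an arrival time $e_{i,j}\ge 0$ is given. An assignment maps each agent $a_i$ either to the NULL station or to a station $s_j$ together with a working slot $k\in\{0,\dots,K-1\}$ such that $e_{i,j}\le kT$, where no working slot of any station is assigned to more than one agent. The total idle time of an assignment is $T$ times the number of working slots (over all stations) that are not assigned to any agent, i.e. $T\,(NK-\#\{\text{agents not assigned NULL}\})$. Define the unweighted ITO flow network as follows: vertices are a source, a sink, one agent vertex $a_i$ per agent, and one working slot vertex $s_{j,k}$ for each station $s_j$ and $k=0,\dots,K-1$. Edges are: source $\to a_i$ with capacity $1$ for every $i$; $a_i\to s_{j,k}$ with capacity $1$ if and only if $k$ is the smallest integer in $\{0,\dots,K-1\}$ with $e_{i,j}\le kT$ (no edge from $a_i$ to station $s_j$ if no such $k$ exists); $s_{j,k-1}\to s_{j,k}$ with capacity $K$ for all $j$ and $k=1,\dots,K-1$; and $s_{j,k}\to$ sink with capacity $1$ for all $j,k$. Then every integral maximum flow on this network corresponds to an assignment minimizing the total idle time: decomposing the flow into source–sink paths, each path of the form source $\to a_i\to s_{j,k_0}\to s_{j,k_0+1}\to\cdots\to s_{j,k}\to$ sink assigns agent $a_i$ to working slot $k$ of station $s_j$, and every agent not on such a path is assigned the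 NULL station; the resulting assignment is feasible and has minimum total idle time among all assignments.
   Context: This is the station-assignment part of One-Shot Target Assignment and Path Finding in a sortation center: agents queue at stations, each station admits at most one agent per working slot of length $T$, and an agent whose (estimated) arrival time at a station is $e$ can occupy any working slot of that station starting at a time $kT\ge e$ within the window. Agents assigned the NULL station are inactive and do not affect the total idle time. *)

theory Defs
  imports Main "HOL-Library.Multiset" Complex_Main
begin

datatype vertex = Src | Snk | Ag nat | Sl nat nat

definition first_slot :: "nat \<Rightarrow> nat \<Rightarrow> real \<Rightarrow> nat \<Rightarrow> bool" where
  "first_slot K T e k \<longleftrightarrow> k < K \<and> e \<le> real (k * T) \<and> (\<forall>k'<k. \<not> e \<le> real (k' * T))"

text \<open>Capacities of the unweighted ITO flow network (0 = no edge).\<close>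
fun cap :: "nat \<Rightarrow> nat \<Rightarrow> nat \<Rightarrow> nat \<Rightarrow> (nat \<Rightarrow> nat \<Rightarrow> real) \<Rightarrow> vertex \<Rightarrow> vertex \<Rightarrow> real" where
  "cap M N K T e Src (Ag i) = (if i < M then 1 else 0)"
| "cap M N K T e (Ag i) (Sl j k) =
     (if i < M \<and> j < N \<and> first_slot K T (e i j) k then 1 else 0)"
| "cap M N K T e (Sl j k) (Sl j' k') =
     (if j < N \<and> j' = j \<and> 1 \<le> k' \<and> k' < K \<and> k = k' - 1 then real K else 0)"
| "cap M N K T e (Sl j k) Snk = (if j < N \<and> k < K then 1 else 0)"
| "cap M N K T e _ _ = 0"

definition verts :: "nat \<Rightarrow> nat \<Rightarrow> nat \<Rightarrow> vertex set" where
  "verts M N K = {Src, Snk} \<union> Ag ` {..<M} \<union> (\<lambda>(j, k). Sl j k) ` ({..<N} \<times> {..<K})"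

definition is_flow :: "nat \<Rightarrow> nat \<Rightarrow> nat \<Rightarrow> nat \<Rightarrow> (nat \<Rightarrow> nat \<Rightarrow> real) \<Rightarrow> (vertex \<Rightarrow> vertex \<Rightarrow> real) \<Rightarrow> bool" where
  "is_flow M N K T e f \<longleftrightarrow>
     (\<forall>u v. 0 \<le> f u v \<and> f u v \<le> cap M N K T e u v) \<and>
     (\<forall>v \<in> verts M N K - {Src, Snk}.
        (\<Sum>u \<in> verts M N K. f u v) = (\<Sum>w \<in> verts M N K. f v w))"

definition flow_value :: "nat \<Rightarrow> nat \<Rightarrow> nat \<Rightarrow> (vertex \<Rightarrow> vertex \<Rightarrow> real) \<Rightarrow> real" where
  "flow_value M N K f = (\<Sum>v \<in> verts M N K. f Src v) - (\<Sum>v \<in> verts M N K. f v Src)"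

definition is_max_flow :: "nat \<Rightarrow> nat \<Rightarrow> nat \<Rightarrow> nat \<Rightarrow> (nat \<Rightarrow> nat \<Rightarrow> real) \<Rightarrow> (vertex \<Rightarrow> vertex \<Rightarrow> real) \<Rightarrow> bool" where
  "is_max_flow M N K T e f \<longleftrightarrow> is_flow M N K T e f \<and>
     (\<forall>g. is_flow M N K T e g \<longrightarrow> flow_value M N K g \<le> flow_value M N K f)"

definition integral_flow :: "(vertex \<Rightarrow> vertex \<Rightarrow> real) \<Rightarrow> bool" where
  "integral_flow f \<longleftrightarrow> (\<forall>u v. f u v \<in> \<nat>)"

definition path_edges :: "vertex list \<Rightarrow> (vertex \<times> vertex) list" where
  "path_edges p = zip p (tl p)"

definition st_path :: "nat \<Rightarrow> nat \<Rightarrow> nat \<Rightarrow> nat \<Rightarrow> (nat \<Rightarrow> nat \<Rightarrow> real) \<Rightarrow> vertex list \<Rightarrow> bool" where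
  "st_path M N K T e p \<longleftrightarrow> 2 \<le> length p \<and> hd p = Src \<and> last p = Snk \<and>
     (\<forall>(u, v) \<in> set (path_edges p). 0 < cap M N K T e u v)"

text \<open>A decomposition of f into unit source-sink paths (a list, repetitions allowed):
  the flow on each edge equals the number of path traversals of that edge.\<close>
definition path_decomposition :: "nat \<Rightarrow> nat \<Rightarrow> nat \<Rightarrow> nat \<Rightarrow> (nat \<Rightarrow> nat \<Rightarrow> real) \<Rightarrow>
    (vertex \<Rightarrow> vertex \<Rightarrow> real) \<Rightarrow> vertex list list \<Rightarrow> bool" where
  "path_decomposition M N K T e f ps \<longleftrightarrow>
     (\<forall>p \<in> set ps. st_path M N K T e p) \<and>
     (\<forall>u v. f u v = real (sum_list (map (\<lambda>p. count_list (path_edges p) (u, v)) ps)))"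

definition path_slot :: "vertex list \<Rightarrow> nat \<times> nat" where
  "path_slot p = (case p ! (length p - 2) of Sl j k \<Rightarrow> (j, k) | _ \<Rightarrow> (0, 0))"

definition induced_assignment :: "vertex list list \<Rightarrow> nat \<Rightarrow> (nat \<times> nat) option" where
  "induced_assignment ps i =
     (if \<exists>p \<in> set ps. p ! 1 = Ag i
      then Some (path_slot (SOME p. p \<in> set ps \<and> p ! 1 = Ag i))
      else None)"

text \<open>Feasible assignment: None = NULL station; Some (j,k) = working slot k of station j.\<close>
definition feasible :: "nat \<Rightarrow> nat \<Rightarrow> nat \<Rightarrow> nat \<Rightarrow> (nat \<Rightarrow> nat \<Rightarrow> real) \<Rightarrow> (nat \<Rightarrow> (nat \<times> nat) option) \<Rightarrow> bool" where
  "feasible M N K T e a \<longleftrightarrow>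
     (\<forall>i < M. \<forall>j k. a i = Some (j, k) \<longrightarrow> j < N \<and> k < K \<and> e i j \<le> real (k * T)) \<and>
     (\<forall>i < M. \<forall>i' < M. a i \<noteq> None \<and> a i = a i' \<longrightarrow> i = i')"

definition idle_time :: "nat \<Rightarrow> nat \<Rightarrow> nat \<Rightarrow> nat \<Rightarrow> (nat \<Rightarrow> (nat \<times> nat) option) \<Rightarrow> nat" where
  "idle_time M N K T a = T * (N * K - card {i. i < M \<and> a i \<noteq> None})"

end

theory Submission
  imports Defs
begin

(* Every source-sink path of the network with positive capacities has the shape
   Src -> a_i -> s_(j,k0) -> s_(j,k0+1) -> ... -> s_(j,k) -> Snk with k0 the first admissible
   slot of a_i at s_j, so it assigns a_i to an admissible slot k. In a path decomposition of a
   flow within the capacities the sink edges of capacity 1 keep these slots distinct, and the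
   source edges of capacity 1 bound the flow value by the number of assigned agents.
   Conversely, routing every agent of a feasible assignment along its path is a flow whose value
   is the number of assigned agents: agents of one station have distinct slots, so at most K of
   them share a slot-to-slot edge. A maximum flow therefore assigns as many agents as any
   feasible assignment, i.e. its idle time is minimal. *)

section \<open>Flows along lists of paths\<close>

lemma path_edges_Nil [simp]: "path_edges [] = []"
  and path_edges_singleton [simp]: "path_edges [x] = []"
  and path_edges_Cons_Cons [simp]: "path_edges (x # y # p) = (x, y) # path_edges (y # p)"
  by (simp_all add: path_edges_def)

lemma set_path_edges_Cons:
  "p \<noteq> [] \<Longrightarrow> set (path_edges (x # p)) = insert (x, hd p) (set (path_edges p))"
  by (cases p) auto

lemma map_fst_path_edges: "map fst (path_edges p) = butlast p"
  by (simp add: path_edges_def map_fst_zip_take butlast_conv_take)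

lemma map_snd_path_edges: "map snd (path_edges p) = tl p"
  by (simp add: path_edges_def map_snd_zip_take)

lemma set_path_edges_subset: "set (path_edges p) \<subseteq> set p \<times> set p"
  by (induction p rule: induct_list012) auto

lemma distinct_path_edges: "distinct p \<Longrightarrow> distinct (path_edges p)"
  by (simp add: path_edges_def distinct_zipI1)

lemma count_list_distinct: "distinct xs \<Longrightarrow> count_list xs x = of_bool (x \<in> set xs)"
  by (induction xs) auto

lemma sum_count_list_in:
  "finite V \<Longrightarrow> fst ` set xs \<subseteq> V \<Longrightarrow>
    (\<Sum>u\<in>V. count_list xs (u, v)) = count_list (map snd xs) v"
proof (induction xs)
  case (Cons x xs)
  have "(\<Sum>u\<in>V. count_list (x # xs) (u, v)) =
      (\<Sum>u\<in>V. count_list xs (u, v) + of_bool (x = (u, v)))"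
    by (rule sum.cong) auto
  also have "\<dots> = count_list (map snd xs) v + of_bool (snd x = v)"
    using Cons by (cases x) (auto simp: sum.distrib)
  finally show ?case
    by simp
qed simp

lemma sum_count_list_out:
  assumes "finite V" "snd ` set xs \<subseteq> V"
  shows "(\<Sum>w\<in>V. count_list xs (v, w)) = count_list (map fst xs) v"
proof -
  have "count_list xs (v, w) = count_list (map prod.swap xs) (w, v)" for w
    using count_list_map_conv[OF inj_swap, of xs "(v, w)"] by simp
  then show ?thesis
    using sum_count_list_in[of V "map prod.swap xs" v] assms by (simp add: image_image comp_def)
qed

lemma count_list_tl: "v \<noteq> hd p \<Longrightarrow> count_list (tl p) v = count_list p v"
  by (cases p) auto

lemma count_list_butlast: "v \<noteq> last p \<Longrightarrow> count_list (butlast p) v = count_list p v"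
  by (induction p) auto

definition path_flow :: "vertex list list \<Rightarrow> vertex \<Rightarrow> vertex \<Rightarrow> real" where
  "path_flow ps u v = real (count_list (concat (map path_edges ps)) (u, v))"

lemma path_decomposition_eq_path_flow:
  "path_decomposition M N K T e f ps \<Longrightarrow> f = path_flow ps"
  by (auto simp: path_decomposition_def path_flow_def count_list_concat comp_def fun_eq_iff)

lemma sum_path_flow_in:
  assumes "finite V" "\<forall>p\<in>set ps. set p \<subseteq> V"
  shows "(\<Sum>u\<in>V. path_flow ps u v) = real (count_list (concat (map tl ps)) v)"
proof -
  have "(\<Sum>u\<in>V. count_list (concat (map path_edges ps)) (u, v)) =
      count_list (map snd (concat (map path_edges ps))) v"
    using assms(2) set_path_edges_subset by (intro sum_count_list_in[OF assms(1)]) fastforce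
  also have "map snd (concat (map path_edges ps)) = concat (map tl ps)"
    by (simp add: map_concat comp_def map_snd_path_edges)
  finally show ?thesis
    by (simp add: path_flow_def flip: of_nat_sum)
qed

lemma sum_path_flow_out:
  assumes "finite V" "\<forall>p\<in>set ps. set p \<subseteq> V"
  shows "(\<Sum>w\<in>V. path_flow ps v w) = real (count_list (concat (map butlast ps)) v)"
proof -
  have "(\<Sum>w\<in>V. count_list (concat (map path_edges ps)) (v, w)) =
      count_list (map fst (concat (map path_edges ps))) v"
    using assms(2) set_path_edges_subset by (intro sum_count_list_out[OF assms(1)]) fastforce
  also have "map fst (concat (map path_edges ps)) = concat (map butlast ps)"
    by (simp add: map_concat comp_def map_fst_path_edges)
  finally show ?thesis
    by (simp add: path_flow_def flip: of_nat_sum)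
qed

lemma path_flow_conservation:
  assumes "finite V" "\<forall>p\<in>set ps. set p \<subseteq> V \<and> hd p = s \<and> last p = t" "v \<noteq> s" "v \<noteq> t"
  shows "(\<Sum>u\<in>V. path_flow ps u v) = (\<Sum>w\<in>V. path_flow ps v w)"
proof -
  have "count_list (tl p) v = count_list (butlast p) v" if "p \<in> set ps" for p
    using assms(2-4) that by (simp add: count_list_tl count_list_butlast)
  then have "count_list (concat (map tl ps)) v = count_list (concat (map butlast ps)) v"
    by (simp add: count_list_concat cong: map_cong)
  with assms(1,2) show ?thesis
    by (simp add: sum_path_flow_in sum_path_flow_out)
qed

lemma path_flow_value:
  assumes "finite V"
    and "\<forall>p\<in>set ps. set p \<subseteq> V \<and> distinct p \<and> p \<noteq> [] \<and> hd p = s \<and> last p \<noteq> s"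
  shows "(\<Sum>w\<in>V. path_flow ps s w) - (\<Sum>u\<in>V. path_flow ps u s) = length ps"
proof -
  have "count_list (butlast p) s = 1 \<and> count_list (tl p) s = 0" if "p \<in> set ps" for p
    using assms(2)[rule_format, OF that]
    by (cases p) (auto simp: count_list_0_iff dest: in_set_butlastD)
  then have "count_list (concat (map butlast ps)) s = length ps"
    and "count_list (concat (map tl ps)) s = 0"
    by (simp_all add: count_list_concat sum_list_triv cong: map_cong)
  with assms show ?thesis
    by (simp add: sum_path_flow_in sum_path_flow_out)
qed

lemma path_flow_pos_iff:
  "0 < path_flow ps u v \<longleftrightarrow> (\<exists>p\<in>set ps. (u, v) \<in> set (path_edges p))"
  by (simp add: path_flow_def flip: neq0_conv add: count_list_0_iff)

lemma path_flow_ge_2: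
  assumes "p \<in> set ps" "q \<in> set ps" "p \<noteq> q"
    and "(u, v) \<in> set (path_edges p)" "(u, v) \<in> set (path_edges q)"
  shows "2 \<le> path_flow ps u v"
proof -
  let ?c = "\<lambda>r. count_list (path_edges r) (u, v)"
  have "1 \<le> ?c p" "1 \<le> ?c q"
    using assms(4,5) by (simp_all add: Suc_le_eq flip: neq0_conv add: count_list_0_iff)
  moreover have "?c q \<le> sum_list (map ?c (remove1 p ps))"
    using assms(2,3) by (intro member_le_sum_list) auto
  moreover have "sum_list (map ?c ps) = ?c p + sum_list (map ?c (remove1 p ps))"
    using assms(1) by (rule sum_list_map_remove1)
  ultimately show ?thesis
    by (simp add: path_flow_def count_list_concat comp_def)
qed

lemma path_flow_map_sorted_list_of_set:
  assumes "finite A" "\<forall>i\<in>A. distinct (P i)"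
  shows "path_flow (map P (sorted_list_of_set A)) u v =
    real (card {i\<in>A. (u, v) \<in> set (path_edges (P i))})"
proof -
  have "count_list (concat (map path_edges (map P (sorted_list_of_set A)))) (u, v) =
      (\<Sum>i\<in>A. count_list (path_edges (P i)) (u, v))"
    using assms(1) by (simp add: count_list_concat sum_list_distinct_conv_sum_set comp_def)
  also have "\<dots> = (\<Sum>i\<in>A. of_bool ((u, v) \<in> set (path_edges (P i))))"
    using assms(2) by (simp add: count_list_distinct distinct_path_edges)
  also have "\<dots> = card {i\<in>A. (u, v) \<in> set (path_edges (P i))}"
    using assms(1) by (simp add: Int_def)
  finally show ?thesis
    by (simp add: path_flow_def)
qed

section \<open>Source-sink paths of the ITO network\<close>

lemma finite_verts: "finite (verts M N K)"
  by (simp add: verts_def)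

lemma first_slot_le: "first_slot K T x k0 \<Longrightarrow> k0 \<le> k \<Longrightarrow> x \<le> real (k * T)"
  unfolding first_slot_def by (meson mult_le_mono1 of_nat_le_iff order.trans)

lemma first_slot_Least:
  assumes "x \<le> real (k * T)" "k < K"
  shows "first_slot K T x (LEAST k0. x \<le> real (k0 * T))"
    and "(LEAST k0. x \<le> real (k0 * T)) \<le> k"
proof -
  show le: "(LEAST k0. x \<le> real (k0 * T)) \<le> k"
    using assms(1) by (rule Least_le)
  show "first_slot K T x (LEAST k0. x \<le> real (k0 * T))"
    unfolding first_slot_def
    using LeastI[of "\<lambda>k0. x \<le> real (k0 * T)" k, OF assms(1)] not_less_Least le assms(2)
    by auto
qed

lemma cap_nonneg: "0 \<le> cap M N K T e u v"
  by (cases "(M, N, K, T, e, u, v)" rule: cap.cases) auto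

lemma cap_pos_ge_1: "0 < cap M N K T e u v \<Longrightarrow> 1 \<le> cap M N K T e u v"
  by (cases "(M, N, K, T, e, u, v)" rule: cap.cases) (auto split: if_splits)

lemma cap_Sl_Sl_pos:
  "0 < cap M N K T e (Sl j m) (Sl j' m') \<Longrightarrow> cap M N K T e (Sl j m) (Sl j' m') = real K"
  by (simp split: if_splits)

definition ito_path :: "nat \<Rightarrow> nat \<Rightarrow> nat \<Rightarrow> nat \<Rightarrow> vertex list" where
  "ito_path i j k0 k = Src # Ag i # map (Sl j) [k0..<Suc k] @ [Snk]"

lemma distinct_ito_path: "distinct (ito_path i j k0 k)"
  by (auto simp: ito_path_def distinct_map inj_on_def)

lemma hd_ito_path [simp]: "hd (ito_path i j k0 k) = Src"
  and last_ito_path [simp]: "last (ito_path i j k0 k) = Snk"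
  and ito_path_not_Nil [simp]: "ito_path i j k0 k \<noteq> []"
  and ito_path_nth_1 [simp]: "ito_path i j k0 k ! Suc 0 = Ag i"
  by (simp_all add: ito_path_def)

lemma path_slot_ito_path: "k0 \<le> k \<Longrightarrow> path_slot (ito_path i j k0 k) = (j, k)"
  by (simp add: ito_path_def path_slot_def nth_append)

lemma set_ito_path_subset_verts:
  "i < M \<Longrightarrow> j < N \<Longrightarrow> k < K \<Longrightarrow> set (ito_path i j k0 k) \<subseteq> verts M N K"
  by (auto simp: ito_path_def verts_def)

lemma set_path_edges_station_chain:
  assumes "k0 \<le> k"
  shows "set (path_edges (map (Sl j) [k0..<Suc k] @ [Snk])) =
    insert (Sl j k, Snk) ((\<lambda>m. (Sl j m, Sl j (Suc m))) ` {k0..<k})"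
  using assms
proof (induction k0 rule: inc_induct)
  case (step m)
  have "map (Sl j) [m..<Suc k] @ [Snk] = Sl j m # map (Sl j) [Suc m..<Suc k] @ [Snk]"
    using step.hyps by (simp add: upt_conv_Cons)
  moreover have "hd (map (Sl j) [Suc m..<Suc k] @ [Snk]) = Sl j (Suc m)"
    using step.hyps by (simp add: upt_conv_Cons del: upt_Suc)
  moreover have "{m..<k} = insert m {Suc m..<k}"
    using step.hyps by auto
  ultimately show ?case
    using step.IH by (simp add: set_path_edges_Cons insert_commute)
qed simp

lemma set_path_edges_ito_path:
  assumes "k0 \<le> k"
  shows "set (path_edges (ito_path i j k0 k)) =
    {(Src, Ag i), (Ag i, Sl j k0), (Sl j k, Snk)} \<union> (\<lambda>m. (Sl j m, Sl j (Suc m))) ` {k0..<k}"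
proof -
  have "map (Sl j) [k0..<Suc k] @ [Snk] = Sl j k0 # map (Sl j) [Suc k0..<Suc k] @ [Snk]"
    using assms by (simp add: upt_conv_Cons del: upt_Suc)
  then show ?thesis
    using set_path_edges_station_chain[OF assms, of j]
    by (simp add: ito_path_def set_path_edges_Cons insert_commute)
qed

lemma st_path_ito_path:
  assumes "i < M" "j < N" "first_slot K T (e i j) k0" "k0 \<le> k" "k < K"
  shows "st_path M N K T e (ito_path i j k0 k)"
proof -
  have "2 \<le> length (ito_path i j k0 k)"
    by (simp add: ito_path_def)
  with assms show ?thesis
    by (auto simp: st_path_def set_path_edges_ito_path first_slot_def)
qed

lemma positive_slot_path_is_station_chain:
  assumes "\<forall>(u, v)\<in>set (path_edges (Sl j k # q)). 0 < cap M N K T e u v"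
    and "last (Sl j k # q) = Snk"
  shows "\<exists>k'. k \<le> k' \<and> k' < K \<and> j < N \<and> Sl j k # q = map (Sl j) [k..<Suc k'] @ [Snk]"
  using assms
proof (induction q arbitrary: k)
  case (Cons v q)
  then have cap_v: "0 < cap M N K T e (Sl j k) v"
    and rest: "\<forall>(u, w)\<in>set (path_edges (v # q)). 0 < cap M N K T e u w" "last (v # q) = Snk"
    by auto
  consider "v = Snk" "j < N" "k < K" | "v = Sl j (Suc k)" "Suc k < K"
    using cap_v by (cases v) (auto split: if_splits)
  then show ?case
  proof cases
    case 1
    then have "q = []"
      using rest(1) by (cases q) auto
    with 1 show ?thesis by auto
  next
    case 2
    with Cons.IH rest obtain k' where "Suc k \<le> k'" "k' < K" "j < N"
      "v # q = map (Sl j) [Suc k..<Suc k'] @ [Snk]"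
      by blast
    then show ?thesis
      by (intro exI[of _ k']) (simp add: upt_conv_Cons del: upt_Suc)
  qed
qed simp

lemma st_path_imp_ito_path:
  assumes "st_path M N K T e p"
  obtains i j k0 k where "i < M" "j < N" "first_slot K T (e i j) k0" "k0 \<le> k" "k < K"
    "p = ito_path i j k0 k"
proof -
  from assms obtain v q where p: "p = Src # v # q"
    unfolding st_path_def by (cases p; cases "tl p") auto
  from assms have pos: "\<forall>(u, w)\<in>set (path_edges p). 0 < cap M N K T e u w" and "last p = Snk"
    unfolding st_path_def by auto
  with p obtain i w q' where "v = Ag i" "i < M" "q = w # q'"
    by (cases v; cases q) (auto split: if_splits)
  with pos p obtain j k0 where "w = Sl j k0" "j < N" "first_slot K T (e i j) k0"
    by (cases w) (auto split: if_splits)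
  with pos p \<open>last p = Snk\<close> \<open>v = Ag i\<close> \<open>q = w # q'\<close>
  have "\<forall>(u, w)\<in>set (path_edges (Sl j k0 # q')). 0 < cap M N K T e u w"
    and "last (Sl j k0 # q') = Snk"
    by auto
  then obtain k where "k0 \<le> k" "k < K" "Sl j k0 # q' = map (Sl j) [k0..<Suc k] @ [Snk]"
    by (blast dest: positive_slot_path_is_station_chain)
  with that \<open>i < M\<close> \<open>j < N\<close> \<open>first_slot K T (e i j) k0\<close>
    p \<open>v = Ag i\<close> \<open>q = w # q'\<close> \<open>w = Sl j k0\<close>
  show ?thesis
    by (simp add: ito_path_def del: upt_Suc)
qed

section \<open>Assignments and flows\<close>

lemma induced_assignment_SomeE:
  assumes "\<forall>p\<in>set ps. st_path M N K T e p" "induced_assignment ps i = Some (j, k)"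
  obtains k0 where "ito_path i j k0 k \<in> set ps" "i < M" "j < N" "k < K" "k0 \<le> k"
    "first_slot K T (e i j) k0"
proof -
  let ?p = "SOME p. p \<in> set ps \<and> p ! 1 = Ag i"
  have "\<exists>p\<in>set ps. p ! 1 = Ag i" and slot: "path_slot ?p = (j, k)"
    using assms(2) by (auto simp: induced_assignment_def split: if_splits)
  then have "?p \<in> set ps" "?p ! 1 = Ag i"
    by (metis (mono_tags, lifting) someI_ex)+
  moreover obtain i' j' k0 k' where "i' < M" "j' < N" "first_slot K T (e i' j') k0" "k0 \<le> k'"
    "k' < K" "?p = ito_path i' j' k0 k'"
    using assms(1) \<open>?p \<in> set ps\<close> by (blast elim: st_path_imp_ito_path)
  ultimately show ?thesis
    using that slot by (auto simp: path_slot_ito_path)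
qed

lemma feasible_induced_assignment:
  assumes paths: "\<forall>p\<in>set ps. st_path M N K T e p"
    and cap: "\<forall>u v. path_flow ps u v \<le> cap M N K T e u v"
  shows "feasible M N K T e (induced_assignment ps)"
  unfolding feasible_def
proof (rule conjI; intro allI impI)
  fix i j k
  assume "induced_assignment ps i = Some (j, k)"
  with paths obtain k0 where "j < N" "k < K" "k0 \<le> k" "first_slot K T (e i j) k0"
    by (blast elim: induced_assignment_SomeE)
  then show "j < N \<and> k < K \<and> e i j \<le> real (k * T)"
    using first_slot_le by blast
next
  fix i i'
  assume "induced_assignment ps i \<noteq> None \<and> induced_assignment ps i = induced_assignment ps i'"
  then obtain j k where
    "induced_assignment ps i = Some (j, k)" "induced_assignment ps i' = Some (j, k)"
    by (metis not_None_eq surj_pair)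
  with paths obtain k0 k0' where p: "ito_path i j k0 k \<in> set ps" "k0 \<le> k"
    and p': "ito_path i' j k0' k \<in> set ps" "k0' \<le> k"
    by (metis induced_assignment_SomeE)
  show "i = i'"
  proof (rule ccontr)
    assume "i \<noteq> i'"
    then have "ito_path i j k0 k \<noteq> ito_path i' j k0' k"
      by (metis ito_path_nth_1 vertex.inject(1))
    with p p' have "2 \<le> path_flow ps (Sl j k) Snk"
      by (intro path_flow_ge_2) (auto simp: set_path_edges_ito_path)
    with cap[rule_format, of "Sl j k" Snk] show False
      by (simp split: if_splits)
  qed
qed

lemma flow_value_le_card_induced:
  assumes paths: "\<forall>p\<in>set ps. st_path M N K T e p"
    and cap: "\<forall>u v. path_flow ps u v \<le> cap M N K T e u v"
  shows "flow_value M N K (path_flow ps) \<le> card {i. i < M \<and> induced_assignment ps i \<noteq> None}"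
proof -
  define C where "C = {i. i < M \<and> induced_assignment ps i \<noteq> None}"
  have src: "path_flow ps Src v \<le> of_bool (v \<in> Ag ` C)" for v
  proof (cases "0 < path_flow ps Src v")
    case True
    then obtain p where p: "p \<in> set ps" "(Src, v) \<in> set (path_edges p)"
      by (auto simp: path_flow_pos_iff)
    with paths obtain i j k0 k where "i < M" "k0 \<le> k" "p = ito_path i j k0 k"
      by (blast elim: st_path_imp_ito_path)
    with p have "v = Ag i"
      by (auto simp: set_path_edges_ito_path)
    have "i \<in> C"
      using p(1) \<open>p = ito_path i j k0 k\<close> \<open>i < M\<close>
      unfolding C_def induced_assignment_def by force
    moreover have "path_flow ps Src (Ag i) \<le> 1"
      using cap[rule_format, of Src "Ag i"] \<open>i < M\<close> by simp
    ultimately show ?thesis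
      using \<open>v = Ag i\<close> by simp
  qed simp
  have "(\<Sum>v\<in>verts M N K. path_flow ps Src v) \<le> (\<Sum>v\<in>verts M N K. of_bool (v \<in> Ag ` C))"
    using src by (rule sum_mono)
  also have "\<dots> = card (Ag ` C)"
    using finite_verts by (simp add: Int_absorb1 C_def verts_def image_subset_iff)
  also have "\<dots> = card C"
    by (simp add: card_image inj_on_def)
  finally show ?thesis
    using sum_nonneg[of "verts M N K" "\<lambda>v. path_flow ps v Src"]
    by (simp add: flow_value_def path_flow_def C_def)
qed

locale feasible_assignment =
  fixes M N K T :: nat and e :: "nat \<Rightarrow> nat \<Rightarrow> real" and a :: "nat \<Rightarrow> (nat \<times> nat) option"
  assumes feasible: "feasible M N K T e a"
begin

definition agents :: "nat set" where
  "agents = {i. i < M \<and> a i \<noteq> None}"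

definition station :: "nat \<Rightarrow> nat" where
  "station i = fst (the (a i))"

definition slot :: "nat \<Rightarrow> nat" where
  "slot i = snd (the (a i))"

definition entry_slot :: "nat \<Rightarrow> nat" where
  "entry_slot i = (LEAST k. e i (station i) \<le> real (k * T))"

definition agent_path :: "nat \<Rightarrow> vertex list" where
  "agent_path i = ito_path i (station i) (entry_slot i) (slot i)"

definition assignment_flow :: "vertex \<Rightarrow> vertex \<Rightarrow> real" where
  "assignment_flow = path_flow (map agent_path (sorted_list_of_set agents))"

lemma finite_agents: "finite agents"
  by (simp add: agents_def)

lemma agentsD:
  assumes "i \<in> agents"
  shows "i < M" "a i = Some (station i, slot i)" "station i < N" "slot i < K"
    "first_slot K T (e i (station i)) (entry_slot i)" "entry_slot i \<le> slot i"
proof -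
  show i: "i < M" and a_i: "a i = Some (station i, slot i)"
    using assms by (auto simp: agents_def station_def slot_def)
  with feasible have "station i < N \<and> slot i < K \<and> e i (station i) \<le> real (slot i * T)"
    unfolding feasible_def by blast
  then show "station i < N" "slot i < K"
    and "first_slot K T (e i (station i)) (entry_slot i)" "entry_slot i \<le> slot i"
    unfolding entry_slot_def using first_slot_Least by auto
qed

lemma station_slot_inj:
  assumes "i \<in> agents" "i' \<in> agents" "station i = station i'" "slot i = slot i'"
  shows "i = i'"
proof -
  have "a i \<noteq> None" "a i = a i'"
    using assms agentsD(2) by simp_all
  with feasible agentsD(1) assms(1,2) show ?thesis
    unfolding feasible_def by blast
qed

lemma st_path_agent_path: "i \<in> agents \<Longrightarrow> st_path M N K T e (agent_path i)"
  unfolding agent_path_def by (intro st_path_ito_path) (simp_all add: agentsD)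

lemma set_path_edges_agent_path:
  "i \<in> agents \<Longrightarrow> set (path_edges (agent_path i)) =
    {(Src, Ag i), (Ag i, Sl (station i) (entry_slot i)), (Sl (station i) (slot i), Snk)} \<union>
    (\<lambda>m. (Sl (station i) m, Sl (station i) (Suc m))) ` {entry_slot i..<slot i}"
  unfolding agent_path_def by (rule set_path_edges_ito_path[OF agentsD(6)])

lemma assignment_flow_le_cap: "assignment_flow u v \<le> cap M N K T e u v"
proof -
  define S where "S = {i\<in>agents. (u, v) \<in> set (path_edges (agent_path i))}"
  have "real (card S) \<le> cap M N K T e u v"
  proof (cases "S = {}")
    case False
    then obtain i0 where "i0 \<in> S" by blast
    then have pos: "0 < cap M N K T e u v"
      using st_path_agent_path by (auto simp: S_def st_path_def)
    have fin: "finite S"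
      using finite_agents by (simp add: S_def)
    consider (chain) j m j' m' where "u = Sl j m" "v = Sl j' m'"
      | (other) "\<forall>j m j' m'. (u, v) \<noteq> (Sl j m, Sl j' m')"
      by blast
    then show ?thesis
    proof cases
      case chain
      have "S \<subseteq> {i\<in>agents. station i = j}"
        using chain by (auto simp: S_def set_path_edges_agent_path)
      moreover have "card {i\<in>agents. station i = j} \<le> card {..<K}"
        by (rule card_inj_on_le[where f = slot]) (auto simp: inj_on_def station_slot_inj agentsD)
      ultimately have "card S \<le> K"
        using card_mono[of "{i\<in>agents. station i = j}" S] finite_agents by auto
      moreover have "cap M N K T e u v = real K"
        using pos unfolding chain by (rule cap_Sl_Sl_pos)
      ultimately show ?thesis
        by simp
    next
      case other
      have "\<forall>i\<in>S. \<forall>i'\<in>S. i = i'"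
        using other by (auto simp: S_def set_path_edges_agent_path intro: station_slot_inj)
      with fin have "card S \<le> 1"
        by (simp add: card_le_Suc0_iff_eq)
      with cap_pos_ge_1[OF pos] show ?thesis
        by linarith
    qed
  qed (simp add: cap_nonneg)
  then show ?thesis
    using finite_agents
    by (simp add: assignment_flow_def path_flow_map_sorted_list_of_set agent_path_def
        distinct_ito_path S_def)
qed

lemma set_agent_path_subset_verts: "i \<in> agents \<Longrightarrow> set (agent_path i) \<subseteq> verts M N K"
  unfolding agent_path_def by (rule set_ito_path_subset_verts) (simp_all add: agentsD)

lemma is_flow_assignment_flow: "is_flow M N K T e assignment_flow"
  unfolding is_flow_def
proof (intro conjI allI ballI)
  fix u v
  show "0 \<le> assignment_flow u v"
    by (simp add: assignment_flow_def path_flow_def)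
  show "assignment_flow u v \<le> cap M N K T e u v"
    by (rule assignment_flow_le_cap)
next
  fix v
  assume "v \<in> verts M N K - {Src, Snk}"
  then show
    "(\<Sum>u\<in>verts M N K. assignment_flow u v) = (\<Sum>w\<in>verts M N K. assignment_flow v w)"
    unfolding assignment_flow_def using finite_agents set_agent_path_subset_verts
    by (intro path_flow_conservation[OF finite_verts, where s = Src and t = Snk])
      (auto simp: agent_path_def)
qed

lemma flow_value_assignment_flow: "flow_value M N K assignment_flow = card agents"
  unfolding flow_value_def assignment_flow_def using finite_agents set_agent_path_subset_verts
  by (subst path_flow_value[OF finite_verts]) (auto simp: agent_path_def distinct_ito_path)

end

theorem theorem1:
  fixes M N K T :: nat and e :: "nat \<Rightarrow> nat \<Rightarrow> real"
    and f :: "vertex \<Rightarrow> vertex \<Rightarrow> real" and ps :: "vertex list list"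
  assumes "0 < T" and "1 \<le> K" and "\<forall>i j. 0 \<le> e i j"
    and "is_max_flow M N K T e f" and "integral_flow f"
    and "path_decomposition M N K T e f ps"
  shows "feasible M N K T e (induced_assignment ps) \<and>
         (\<forall>a. feasible M N K T e a \<longrightarrow>
              idle_time M N K T (induced_assignment ps) \<le> idle_time M N K T a)"
proof -
  have f: "f = path_flow ps"
    using assms(6) by (rule path_decomposition_eq_path_flow)
  have paths: "\<forall>p\<in>set ps. st_path M N K T e p"
    using assms(6) by (simp add: path_decomposition_def)
  have cap: "\<forall>u v. path_flow ps u v \<le> cap M N K T e u v"
    using assms(4) f by (simp add: is_max_flow_def is_flow_def)
  have served:
    "card {i. i < M \<and> a i \<noteq> None} \<le> card {i. i < M \<and> induced_assignment ps i \<noteq> None}"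
    if "feasible M N K T e a" for a
  proof -
    interpret feasible_assignment M N K T e a
      using that by unfold_locales
    have "real (card agents) = flow_value M N K assignment_flow"
      by (simp add: flow_value_assignment_flow)
    also have "\<dots> \<le> flow_value M N K f"
      using assms(4) is_flow_assignment_flow by (simp add: is_max_flow_def)
    also have "\<dots> \<le> card {i. i < M \<and> induced_assignment ps i \<noteq> None}"
      unfolding f using paths cap by (rule flow_value_le_card_induced)
    finally show ?thesis
      by (simp add: agents_def)
  qed
  show ?thesis
    using feasible_induced_assignment[OF paths cap] served
    by (auto simp: idle_time_def intro!: mult_le_mono2 diff_le_mono2)
qed

end
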